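(* Let $B>0$ and let $a_0,\dots,a_T\in[0,B]$ with $a_0>0$. Then $$\sum_{t=1}^{T}\frac{a_t}{\sum_{\tau=0}^{t-1}a_\tau}\le\log_2\!\left(\frac{\sum_{t=0}^{T-1}a_t}{a_0}\right)+1+\frac{2B}{a_0}.$$ *)

theory Defs
  imports Complex_Main
begin

end

theory Submission
  imports Defs "HOL-Analysis.Convex"
begin

text \<open>Write \<open>S\<^sub>t = a\<^sub>0 + \<dots> + a\<^sub>t\<^sub>-\<^sub>1\<close>. A term \<open>a\<^sub>t / S\<^sub>t\<close> with \<open>a\<^sub>t \<le> S\<^sub>t\<close>
  is at most \<open>log\<^sub>2 (S\<^sub>t\<^sub>+\<^sub>1 / S\<^sub>t)\<close>, since \<open>u \<le> log\<^sub>2 (1 + u)\<close> on \<open>[0, 1]\<close>; these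
  logarithms telescope to \<open>log\<^sub>2 (S\<^sub>T / a\<^sub>0)\<close>. A term with \<open>a\<^sub>t > S\<^sub>t\<close> is at most
  \<open>B / S\<^sub>t\<close>, which is dominated by the decrease \<open>2B/S\<^sub>t - 2B/S\<^sub>t\<^sub>+\<^sub>1\<close> of the
  potential \<open>2B/S\<close>, and these decreases telescope to at most \<open>2B/a\<^sub>0\<close>. The last
  term is estimated by \<open>1\<close> instead of a logarithm, so that the bound only involves
  \<open>S\<^sub>T\<close> and not \<open>S\<^sub>T\<^sub>+\<^sub>1\<close>.\<close>

lemma le_log2_1_plus:
  fixes u :: real
  assumes "0 \<le> u" "u \<le> 1"
  shows "u \<le> log 2 (1 + u)"
proof -
  have "exp (u * ln 2) \<le> 1 + u"
    using convex_onD[OF exp_convex, of u 0 "ln 2"] assms by simp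
  then have "u * ln 2 \<le> ln (1 + u)"
    using assms by (simp add: ln_ge_iff)
  then show ?thesis
    unfolding log_def by (simp add: pos_le_divide_eq)
qed

lemma potential_decrease_nonneg:
  fixes s x B :: real
  assumes "0 < s" "0 \<le> x" "0 \<le> B"
  shows "0 \<le> 2*B/s - 2*B/(s + x)"
  using assms by (simp add: divide_left_mono)

lemma ratio_le_potential_decrease:
  fixes s x B :: real
  assumes "0 < s" "s < x" "x \<le> B"
  shows "x / s \<le> 2*B/s - 2*B/(s + x)"
proof -
  have "2*B/(s + x) \<le> B/s"
    using assms by (simp add: field_simps)
  moreover have "x / s \<le> B / s"
    using assms by (simp add: divide_right_mono)
  ultimately show ?thesis by simp
qed

lemma ratio_le_log2_plus_potential_decrease:
  fixes s x B :: real
  assumes "0 < s" "0 \<le> x" "x \<le> B"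
  shows "x / s \<le> log 2 ((s + x) / s) + (2*B/s - 2*B/(s + x))"
proof (cases "x \<le> s")
  case True
  have "x / s \<le> log 2 (1 + x / s)"
    using le_log2_1_plus[of "x / s"] True assms by simp
  also have "1 + x / s = (s + x) / s"
    using assms by (simp add: field_simps)
  finally show ?thesis
    using potential_decrease_nonneg[of s x B] assms by linarith
next
  case False
  have "0 \<le> log 2 ((s + x) / s)"
    using assms by simp
  then show ?thesis
    using ratio_le_potential_decrease[of s x B] False assms by linarith
qed

lemma ratio_le_1_plus_potential_decrease:
  fixes s x B :: real
  assumes "0 < s" "0 \<le> x" "x \<le> B"
  shows "x / s \<le> 1 + (2*B/s - 2*B/(s + x))"
proof (cases "x \<le> s")
  case True
  then have "x / s \<le> 1"
    using assms by simp
  then show ?thesis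
    using potential_decrease_nonneg[of s x B] assms by linarith
next
  case False
  then show ?thesis
    using ratio_le_potential_decrease[of s x B] assms by linarith
qed

lemma first_le_sum_lessThan:
  fixes a :: "nat \<Rightarrow> real"
  assumes "0 < n" "\<And>t. t < n \<Longrightarrow> 0 \<le> a t"
  shows "a 0 \<le> (\<Sum>\<tau><n. a \<tau>)"
  using assms by (intro member_le_sum) auto

lemma sum_ratio_prefix_le_log2:
  fixes a :: "nat \<Rightarrow> real" and B :: real
  assumes "0 < a 0" "\<And>t. t \<le> n \<Longrightarrow> 0 \<le> a t \<and> a t \<le> B"
  shows "(\<Sum>t=1..n. a t / (\<Sum>\<tau><t. a \<tau>))
           \<le> log 2 ((\<Sum>t\<le>n. a t) / a 0) + 2*B/a 0 - 2*B/(\<Sum>t\<le>n. a t)"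
  using assms(2)
proof (induction n)
  case 0
  then show ?case using assms(1) by simp
next
  case (Suc n)
  define s where "s = (\<Sum>t\<le>n. a t)"
  define x where "x = a (Suc n)"
  have s_pos: "0 < s"
    using first_le_sum_lessThan[of "Suc n" a] Suc.prems assms(1)
    unfolding s_def lessThan_Suc_atMost by fastforce
  have x: "0 \<le> x" "x \<le> B"
    using Suc.prems[of "Suc n"] unfolding x_def by auto
  have IH: "(\<Sum>t=1..n. a t / (\<Sum>\<tau><t. a \<tau>)) \<le> log 2 (s / a 0) + 2*B/a 0 - 2*B/s"
    using Suc.IH Suc.prems unfolding s_def by simp
  have sum_Suc: "(\<Sum>t\<le>Suc n. a t) = s + x"
    unfolding s_def x_def by simp
  have log_split: "log 2 ((s + x) / a 0) = log 2 (s / a 0) + log 2 ((s + x) / s)"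
    using s_pos x assms(1) by (simp add: log_divide)
  have "(\<Sum>t=1..Suc n. a t / (\<Sum>\<tau><t. a \<tau>))
          = (\<Sum>t=1..n. a t / (\<Sum>\<tau><t. a \<tau>)) + x / s"
    unfolding s_def x_def by (simp add: lessThan_Suc_atMost)
  also have "\<dots> \<le> log 2 ((s + x) / a 0) + 2*B/a 0 - 2*B/(s + x)"
    using IH ratio_le_log2_plus_potential_decrease[OF s_pos x] log_split by simp
  finally show ?case
    unfolding sum_Suc .
qed

theorem lemmaB1:
  fixes a :: "nat \<Rightarrow> real" and B :: real and T :: nat
  assumes "B > 0"
    and "\<And>t. t \<le> T \<Longrightarrow> 0 \<le> a t \<and> a t \<le> B"
    and "a 0 > 0"
  shows "(\<Sum>t=1..T. a t / (\<Sum>\<tau><t. a \<tau>))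
           \<le> log 2 ((\<Sum>t<T. a t) / a 0) + 1 + 2 * B / a 0"
proof (cases T)
  case 0
  \<comment> \<open>the right-hand side contains \<open>log 2 0\<close>, which is \<open>0\<close> in HOL\<close>
  then show ?thesis using assms by (simp add: log_def)
next
  case (Suc m)
  have sum_T: "(\<Sum>t<T. a t) = (\<Sum>t\<le>m. a t)"
    using Suc lessThan_Suc_atMost by simp
  define s where "s = (\<Sum>t\<le>m. a t)"
  have s_pos: "0 < s"
    using first_le_sum_lessThan[of T a] assms Suc sum_T unfolding s_def by fastforce
  have prefix: "(\<Sum>t=1..m. a t / (\<Sum>\<tau><t. a \<tau>)) \<le> log 2 (s / a 0) + 2*B/a 0 - 2*B/s"
    unfolding s_def by (rule sum_ratio_prefix_le_log2) (use assms Suc in auto)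
  have last: "a T / s \<le> 1 + (2*B/s - 2*B/(s + a T))"
    using ratio_le_1_plus_potential_decrease[OF s_pos] assms(2)[of T] by simp
  have "0 \<le> 2*B/(s + a T)"
    using s_pos assms(1) assms(2)[of T] by simp
  moreover have "(\<Sum>t=1..T. a t / (\<Sum>\<tau><t. a \<tau>))
                   = (\<Sum>t=1..m. a t / (\<Sum>\<tau><t. a \<tau>)) + a T / s"
    unfolding s_def using Suc by (simp add: lessThan_Suc_atMost del: sum.lessThan_Suc)
  ultimately show ?thesis
    unfolding sum_T s_def[symmetric] using prefix last by linarith
qed

end
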